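(* Let $T$ be a triangle with diameter $h_T$ and inradius $r_T$, $h_T\le\varrho r_T$, let $\Gamma_{h,T}$ be an open line segment with endpoints on $\partial T$ dividing $T$ into two nonempty open parts $T_h^\pm$, and let $\mu^\pm>0$. Let $(\boldsymbol{\phi}^{IFE}_{i,T},\varphi^{IFE}_{i,T})\in\mathbf{V}M_h^{IFE}(T)$, $i=1,\dots,7$, be the IFE basis functions, i.e. $N_{j,T}(\boldsymbol{\phi}^{IFE}_{i,T},\varphi^{IFE}_{i,T})=\delta_{ij}$ for $i,j=1,\dots,7$. Then there is a constant $C>0$ depending only on $\mu^\pm$ and $\varrho$ such that for $m=0,1$: $$|(\boldsymbol{\phi}^{IFE}_{i,T})^\pm|_{W^m_\infty(T)}\le Ch_T^{-m},\quad \|(\varphi^{IFE}_{i,T})^\pm\|_{L^\infty(T)}\le Ch_T^{-1},\quad i=1,\dots,6,$$ $$|(\boldsymbol{\phi}^{IFE}_{7,T})^\pm|_{W^m_\infty(T)}=0,\qquad \|(\varphi^{IFE}_{7,T})^\pm\|_{L^\infty(T)}=1.$$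
   Context: $\mathbf{n}_h$ is the unit normal of $\Gamma_{h,T}$ pointing into $T_h^+$. $\sigma(\mu,\mathbf{v},q)=2\mu\boldsymbol{\epsilon}(\mathbf{v})-q\mathbb{I}$, $\boldsymbol{\epsilon}(\mathbf{v})=\frac12(\nabla\mathbf{v}+(\nabla\mathbf{v})^T)$; for polynomials $g^\pm$, $[\![g^\pm]\!]=g^+-g^-$. The local IFE space $\mathbf{V}M_h^{IFE}(T)$ consists of pairs $(\mathbf{v},q)$ with $\mathbf{v}=\mathbf{v}^\pm$, $q=q^\pm$ on $T_h^\pm$, where $\mathbf{v}^\pm\in P_1(T)^2$, $q^\pm\in P_0(T)$ satisfy $[\![\sigma(\mu^\pm,\mathbf{v}^\pm,q^\pm)\mathbf{n}_h]\!]=\mathbf{0}$, $\mathbf{v}^+=\mathbf{v}^-$ on $\Gamma_{h,T}$, $[\![\nabla\cdot\mathbf{v}^\pm]\!]=0$; for such a pair, $(\cdot)^\pm$ denotes the polynomial pieces $\mathbf{v}^\pm$, $q^\pm$ regarded on all of $T$. The degrees of freedom, for edges $e_1,e_2,e_3$ and $\mathbf{v}=(v_1,v_2)^T$, are $N_{i,T}=|e_i|^{-1}\int_{e_i}v_1$, $N_{3+i,T}=|e_i|^{-1}\int_{e_i}v_2$ ($i=1,2,3$), $N_{7,T}=|T|^{-1}\int_Tq$; the pairs in $\mathbf{V}M_h^{IFE}(T)$ are uniquely determined by these values. *)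

theory Defs
  imports "HOL-Analysis.Analysis"
begin

text \<open>Points of the plane are real^2; the triangle T with vertices a b c is the closed
  convex hull; edges e1 = [b,c], e2 = [c,a], e3 = [a,b].\<close>

definition tri :: "real^2 \<Rightarrow> real^2 \<Rightarrow> real^2 \<Rightarrow> (real^2) set" where
  "tri a b c = convex hull {a, b, c}"

definition inradius :: "(real^2) set \<Rightarrow> real" where
  "inradius T = Sup {r. \<exists>x. cball x r \<subseteq> T}"

text \<open>Interface: the line {x. n \<bullet> x = d}, with unit normal n pointing into T^+.\<close>
definition Tplus :: "(real^2) set \<Rightarrow> real^2 \<Rightarrow> real \<Rightarrow> (real^2) set" where
  "Tplus T n d = {x \<in> interior T. n \<bullet> x > d}"

definition Tminus :: "(real^2) set \<Rightarrow> real^2 \<Rightarrow> real \<Rightarrow> (real^2) set" where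
  "Tminus T n d = {x \<in> interior T. n \<bullet> x < d}"

definition Gamma :: "(real^2) set \<Rightarrow> real^2 \<Rightarrow> real \<Rightarrow> (real^2) set" where
  "Gamma T n d = {x \<in> interior T. n \<bullet> x = d}"

definition pw :: "real^2 \<Rightarrow> real \<Rightarrow> (real^2 \<Rightarrow> 'b) \<Rightarrow> (real^2 \<Rightarrow> 'b) \<Rightarrow> real^2 \<Rightarrow> 'b" where
  "pw n d fp fm x = (if n \<bullet> x > d then fp x else fm x)"

text \<open>The local IFE space: v^\<pm>(x) = A^\<pm> x + b^\<pm> (P1), q^\<pm> constants.
  sigma(mu,v,q) n = (mu (A + A^T) - q I) n; div v = trace A.\<close>
definition is_ife ::
  "real \<Rightarrow> real \<Rightarrow> (real^2) set \<Rightarrow> real^2 \<Rightarrow> real \<Rightarrow>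
   real^2^2 \<Rightarrow> real^2 \<Rightarrow> real \<Rightarrow> real^2^2 \<Rightarrow> real^2 \<Rightarrow> real \<Rightarrow> bool" where
  "is_ife mup mum T n d Ap bp qp Am bm qm \<longleftrightarrow>
     (mup *\<^sub>R (Ap + transpose Ap) - qp *\<^sub>R mat 1) *v n
       = (mum *\<^sub>R (Am + transpose Am) - qm *\<^sub>R mat 1) *v n
     \<and> (\<forall>x \<in> Gamma T n d. Ap *v x + bp = Am *v x + bm)
     \<and> trace Ap = trace Am"

text \<open>Edge average |e|^{-1} \<integral>_e f for the edge [p,q].\<close>
definition edge_avg :: "(real^2 \<Rightarrow> real) \<Rightarrow> real^2 \<Rightarrow> real^2 \<Rightarrow> real" where
  "edge_avg f p q = integral {0..1} (\<lambda>t. f (p + t *\<^sub>R (q - p)))"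

definition edge_start :: "real^2 \<Rightarrow> real^2 \<Rightarrow> real^2 \<Rightarrow> nat \<Rightarrow> real^2" where
  "edge_start a b c k = (if k = 1 then b else if k = 2 then c else a)"

definition edge_end :: "real^2 \<Rightarrow> real^2 \<Rightarrow> real^2 \<Rightarrow> nat \<Rightarrow> real^2" where
  "edge_end a b c k = (if k = 1 then c else if k = 2 then a else b)"

definition dof ::
  "real^2 \<Rightarrow> real^2 \<Rightarrow> real^2 \<Rightarrow> real^2 \<Rightarrow> real \<Rightarrow>
   real^2^2 \<Rightarrow> real^2 \<Rightarrow> real \<Rightarrow> real^2^2 \<Rightarrow> real^2 \<Rightarrow> real \<Rightarrow> nat \<Rightarrow> real" where
  "dof a b c n d Ap bp qp Am bm qm j =
     (let v = pw n d (\<lambda>x. Ap *v x + bp) (\<lambda>x. Am *v x + bm);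
          q = pw n d (\<lambda>x. qp) (\<lambda>x. qm) in
      if j \<in> {1, 2, 3} then edge_avg (\<lambda>x. v x $ 1) (edge_start a b c j) (edge_end a b c j)
      else if j \<in> {4, 5, 6} then
        edge_avg (\<lambda>x. v x $ 2) (edge_start a b c (j - 3)) (edge_end a b c (j - 3))
      else integral (tri a b c) q / measure lebesgue (tri a b c))"

end

theory Submission
  imports Defs
begin

text \<open>
  Continuity of the velocity across the interface and equality of the divergences force
  \<open>v\<^sup>- = v\<^sup>+ - \<beta> \<psi> t\<close>, where \<open>\<psi> x = n \<bullet> x - d\<close> and \<open>t\<close> is the unit tangent.  The mean of a
  velocity component over an edge is therefore the value of \<open>v\<^sup>+\<close> at the edge midpoint minus
  \<open>\<beta> t\<close> times the edge mean of the ramp \<open>min \<psi> 0\<close>.  On every triangle the three edge means of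
  this ramp coincide with the edge means of one affine function \<open>s \<psi> + \<kappa>\<close> with \<open>0 \<le> s \<le> 1\<close>,
  so the six velocity degrees of freedom are exactly the edge-midpoint values of the affine
  function \<open>w = v\<^sup>+ - \<beta> (s \<psi> + \<kappa>) t\<close>.  This bounds \<open>w\<close> on the triangle and, through an
  inscribed ball of radius at least \<open>h / (2 \<rho>)\<close>, its gradient by \<open>O(1/h)\<close>.  The tangential
  component of the traction condition reads
  \<open>\<beta> (\<mu>\<^sup>- + (\<mu>\<^sup>+ - \<mu>\<^sup>-) s) = - (\<mu>\<^sup>+ - \<mu>\<^sup>-) (t \<bullet> \<nabla>w n + n \<bullet> \<nabla>w t)\<close>, which gives
  \<open>h \<bar>\<beta>\<bar> = O(1)\<close>; its normal component gives \<open>q\<^sup>+ - q\<^sup>- = 2 (\<mu>\<^sup>+ - \<mu>\<^sup>-) n \<bullet> \<nabla>v\<^sup>+ n\<close>, and the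
  pressure degree of freedom is a convex combination of \<open>q\<^sup>+\<close> and \<open>q\<^sup>-\<close>.
\<close>

definition ramp_mean :: "real \<Rightarrow> real \<Rightarrow> real" where
  "ramp_mean x y = (if x = y then min x 0 else ((min y 0)\<^sup>2 - (min x 0)\<^sup>2) / (2 * (y - x)))"

lemma has_integral_ramp_mean:
  "((\<lambda>\<tau>. min (x + \<tau> * (y - x)) 0) has_integral ramp_mean x y) {0..1}"
proof (cases "x = y")
  case True
  then show ?thesis
    unfolding ramp_mean_def using has_integral_const_real[of "min x 0" 0 1] by simp
next
  case False
  define k where "k = y - x"
  have k: "k \<noteq> 0" using False k_def by auto
  define F where "F = (\<lambda>\<tau>. (min (x + \<tau> * k) 0)\<^sup>2 / (2 * k))"
  have "(F has_real_derivative min (x + \<tau> * k) 0) (at \<tau>)" if "\<tau> \<noteq> - x / k" for \<tau>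
  proof (cases "x + \<tau> * k < 0")
    case True
    have "((\<lambda>\<tau>. (x + \<tau> * k)\<^sup>2 / (2 * k)) has_real_derivative x + \<tau> * k) (at \<tau>)"
      using k by (auto intro!: derivative_eq_intros simp: field_simps power2_eq_square)
    then show ?thesis
      using True
      by (rule_tac has_field_derivative_transform_within_open[where S = "{s. x + s * k < 0}"])
        (auto simp: F_def intro!: open_Collect_less continuous_intros)
  next
    case False
    with that k have "x + \<tau> * k > 0" by (auto simp: field_simps)
    then show ?thesis
      by (rule_tac has_field_derivative_transform_within_open
          [where f = "\<lambda>_. 0" and S = "{s. x + s * k > 0}"])
        (auto simp: F_def intro!: open_Collect_less continuous_intros)
  qed
  then have "((\<lambda>\<tau>. min (x + \<tau> * k) 0) has_integral F 1 - F 0) {0..1}"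
    using k by (intro fundamental_theorem_of_calculus_interior_strong[of "{- x / k}"])
      (auto simp: F_def has_real_derivative_iff_has_vector_derivative intro!: continuous_intros)
  moreover have "F 1 - F 0 = ramp_mean x y"
    using False by (simp add: F_def ramp_mean_def k_def diff_divide_distrib)
  ultimately show ?thesis by (simp add: k_def)
qed

lemma ramp_mean_commute: "ramp_mean x y = ramp_mean y x"
  unfolding ramp_mean_def by (auto simp: field_simps)

lemma ramp_mean_nonneg: "x \<ge> 0 \<Longrightarrow> y \<ge> 0 \<Longrightarrow> ramp_mean x y = 0"
  unfolding ramp_mean_def by (auto simp: min_def)

lemma ramp_mean_sign_change: "x < 0 \<Longrightarrow> y \<ge> 0 \<Longrightarrow> ramp_mean x y = x\<^sup>2 / (2 * (x - y))"
  unfolding ramp_mean_def by (auto simp: min_def field_simps)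

lemma ramp_mean_uminus: "ramp_mean x y = (x + y) / 2 + ramp_mean (- x) (- y)"
  unfolding ramp_mean_def by (auto simp: min_def field_simps power2_eq_square)

lemma abs_ramp_mean_le:
  assumes x: "\<bar>x\<bar> \<le> h" and y: "\<bar>y\<bar> \<le> h"
  shows "\<bar>ramp_mean x y\<bar> \<le> h"
proof -
  have "norm (min (x + \<tau> * (y - x)) 0) \<le> h" if "\<tau> \<in> cbox 0 1" for \<tau>
  proof -
    have "\<bar>x + \<tau> * (y - x)\<bar> = \<bar>(1 - \<tau>) * x + \<tau> * y\<bar>"
      by (simp add: algebra_simps)
    also have "\<dots> \<le> (1 - \<tau>) * \<bar>x\<bar> + \<tau> * \<bar>y\<bar>"
      using that by (simp add: abs_mult abs_triangle_ineq[THEN order_trans])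
    also have "\<dots> \<le> (1 - \<tau>) * h + \<tau> * h"
      using that x y by (intro add_mono mult_left_mono) auto
    finally have "\<bar>x + \<tau> * (y - x)\<bar> \<le> h"
      by (simp add: algebra_simps)
    then show ?thesis
      by (auto simp: min_def)
  qed
  then show ?thesis
    using has_integral_bound[of h, OF _ has_integral_ramp_mean[of x y, unfolded box_real(2)[symmetric]]]
      x by simp
qed

text \<open>\<open>x, y, z\<close> stand for the values of \<open>\<psi>\<close> at the vertices \<open>a, b, c\<close>; the three conjuncts
  are the edges \<open>[b, c]\<close>, \<open>[c, a]\<close>, \<open>[a, b]\<close> in the order of the degrees of freedom.\<close>

definition ramp_fit :: "real \<Rightarrow> real \<Rightarrow> real \<Rightarrow> real \<Rightarrow> real \<Rightarrow> bool" where
  "ramp_fit s \<kappa> x y z \<longleftrightarrow> 0 \<le> s \<and> s \<le> 1 \<and>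
     ramp_mean y z = s * (y + z) / 2 + \<kappa> \<and> ramp_mean z x = s * (z + x) / 2 + \<kappa> \<and>
     ramp_mean x y = s * (x + y) / 2 + \<kappa>"

lemma ramp_fit_swap:
  "ramp_fit s \<kappa> x y z \<Longrightarrow> ramp_fit s \<kappa> y x z"
  "ramp_fit s \<kappa> x y z \<Longrightarrow> ramp_fit s \<kappa> x z y"
  unfolding ramp_fit_def by (metis ramp_mean_commute add.commute)+

lemma ramp_fit_uminus:
  assumes "ramp_fit s \<kappa> (- x) (- y) (- z)"
  shows "ramp_fit (1 - s) \<kappa> x y z"
proof -
  have "ramp_mean y z = (1 - s) * (y + z) / 2 + \<kappa>"
    "ramp_mean z x = (1 - s) * (z + x) / 2 + \<kappa>"
    "ramp_mean x y = (1 - s) * (x + y) / 2 + \<kappa>"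
    using assms ramp_mean_uminus[of y z] ramp_mean_uminus[of z x] ramp_mean_uminus[of x y]
    by (simp_all add: ramp_fit_def field_simps)
  then show ?thesis
    using assms by (simp add: ramp_fit_def)
qed

lemma ramp_fit_nonneg: "x \<ge> 0 \<Longrightarrow> y \<ge> 0 \<Longrightarrow> z \<ge> 0 \<Longrightarrow> ramp_fit 0 0 x y z"
  by (simp add: ramp_fit_def ramp_mean_nonneg)

lemma ramp_fit_one_negative:
  assumes "x < 0" "y \<ge> 0" "z \<ge> 0"
  defines "s \<equiv> x\<^sup>2 / ((x - y) * (x - z))"
  shows "ramp_fit s (- s * (y + z) / 2) x y z"
proof -
  have "(x - y) * (x - z) = x\<^sup>2 + ((- x) * (y + z) + y * z)"
    by (simp add: algebra_simps power2_eq_square)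
  moreover have "(- x) * (y + z) \<ge> 0" "y * z \<ge> 0"
    using assms by simp_all (simp add: mult_nonpos_nonneg)
  moreover have "x\<^sup>2 > 0"
    using assms by simp
  ultimately have le: "x\<^sup>2 \<le> (x - y) * (x - z)" and pos: "(x - y) * (x - z) > 0"
    by linarith+
  have s: "s * ((x - y) * (x - z)) = x\<^sup>2"
    using pos unfolding s_def by (metis less_irrefl nonzero_eq_divide_eq)
  have "x - y \<noteq> 0" "x - z \<noteq> 0"
    using assms by auto
  then have "x\<^sup>2 / (2 * (x - z)) = s * (x - y) / 2" "x\<^sup>2 / (2 * (x - y)) = s * (x - z) / 2"
    unfolding s[symmetric] by (simp_all add: field_simps)
  moreover have "ramp_mean z x = x\<^sup>2 / (2 * (x - z))" "ramp_mean x y = x\<^sup>2 / (2 * (x - y))"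
    using assms by (simp_all add: ramp_mean_commute[of z] ramp_mean_sign_change)
  moreover have "s * (x - y) / 2 = s * (z + x) / 2 - s * (y + z) / 2"
    "s * (x - z) / 2 = s * (x + y) / 2 - s * (y + z) / 2"
    by (simp_all add: field_simps)
  moreover have "0 \<le> s" "s \<le> 1"
    using le pos by (simp_all add: s_def)
  ultimately show ?thesis
    using assms(2,3) by (simp add: ramp_fit_def ramp_mean_nonneg)
qed

lemma ex_ramp_fit_at_most_one_negative:
  assumes "\<not> (x < 0 \<and> y < 0)" "\<not> (y < 0 \<and> z < 0)" "\<not> (z < 0 \<and> x < 0)"
  shows "\<exists>s \<kappa>. ramp_fit s \<kappa> x y z"
  using assms ramp_fit_nonneg ramp_fit_one_negative ramp_fit_swap
  by (metis linorder_not_less)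

lemma ex_ramp_fit: "\<exists>s \<kappa>. ramp_fit s \<kappa> x y z"
proof (cases "\<not> (x < 0 \<and> y < 0) \<and> \<not> (y < 0 \<and> z < 0) \<and> \<not> (z < 0 \<and> x < 0)")
  case True
  then show ?thesis by (simp add: ex_ramp_fit_at_most_one_negative)
next
  case False
  then obtain s \<kappa> where "ramp_fit s \<kappa> (- x) (- y) (- z)"
    using ex_ramp_fit_at_most_one_negative[of "- x" "- y" "- z"] by auto
  then show ?thesis
    using ramp_fit_uminus by blast
qed

lemma has_integral_affine_01: "((\<lambda>\<tau>::real. c0 + \<tau> * c1) has_integral c0 + c1 / 2) {0..1}"
proof -
  have "((\<lambda>\<tau>::real. c0 + \<tau> * c1) has_integral (c0 * 1 + c1 * 1\<^sup>2 / 2) - (c0 * 0 + c1 * 0\<^sup>2 / 2)) {0..1}"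
    by (rule fundamental_theorem_of_calculus)
      (auto intro!: derivative_eq_intros simp flip: has_real_derivative_iff_has_vector_derivative)
  then show ?thesis by simp
qed

lemma edge_avg_pw_velocity:
  assumes jump: "\<And>y. Am *v y + bm = Ap *v y + bp - (\<beta> * (n \<bullet> y - d)) *\<^sub>R t"
  shows "edge_avg (\<lambda>x. pw n d (\<lambda>x. Ap *v x + bp) (\<lambda>x. Am *v x + bm) x $ k) p q
           = (Ap *v midpoint p q + bp) $ k - \<beta> * t $ k * ramp_mean (n \<bullet> p - d) (n \<bullet> q - d)"
proof -
  have pw_eq: "pw n d (\<lambda>x. Ap *v x + bp) (\<lambda>x. Am *v x + bm) x
          = Ap *v x + bp - (\<beta> * min (n \<bullet> x - d) 0) *\<^sub>R t" for x
    using jump unfolding pw_def by (auto simp: min_def)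
  have "(\<lambda>\<tau>. pw n d (\<lambda>x. Ap *v x + bp) (\<lambda>x. Am *v x + bm) (p + \<tau> *\<^sub>R (q - p)) $ k)
      = (\<lambda>\<tau>. ((Ap *v p + bp) $ k + \<tau> * (Ap *v (q - p)) $ k)
             - (\<beta> * t $ k) * min ((n \<bullet> p - d) + \<tau> * ((n \<bullet> q - d) - (n \<bullet> p - d))) 0)"
    unfolding pw_eq by (auto simp: matrix_vector_right_distrib matrix_vector_mult_scaleR inner_add_right
        inner_diff_right algebra_simps)
  moreover have "((\<lambda>\<tau>. ((Ap *v p + bp) $ k + \<tau> * (Ap *v (q - p)) $ k)
             - (\<beta> * t $ k) * min ((n \<bullet> p - d) + \<tau> * ((n \<bullet> q - d) - (n \<bullet> p - d))) 0)
      has_integral ((Ap *v p + bp) $ k + (Ap *v (q - p)) $ k / 2)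
             - (\<beta> * t $ k) * ramp_mean (n \<bullet> p - d) (n \<bullet> q - d)) {0..1}"
    by (intro has_integral_diff has_integral_affine_01 has_integral_mult_right has_integral_ramp_mean)
  moreover have "(Ap *v p + bp) $ k + (Ap *v (q - p)) $ k / 2 = (Ap *v midpoint p q + bp) $ k"
    by (simp add: midpoint_def matrix_vector_right_distrib matrix_vector_mult_scaleR
        matrix_vector_mult_diff_distrib field_simps)
  ultimately show ?thesis
    unfolding edge_avg_def by (simp add: integral_unique)
qed

lemma average_pw_const:
  fixes T :: "(real^2) set"
  assumes T: "T \<in> lmeasurable" and pos: "measure lebesgue T > 0"
  obtains l where "0 \<le> l" "l \<le> 1"
    "integral T (pw n d (\<lambda>x. qp) (\<lambda>x. qm)) / measure lebesgue T = qm + l * (qp - qm)"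
proof -
  define H where "H = {x. n \<bullet> x > d}"
  have "open H"
    unfolding H_def by (intro open_Collect_less continuous_intros)
  then have "H \<in> sets lebesgue"
    by (metis borel_open sets_completionI_sets sets_lborel)
  then have HT: "H \<inter> T \<in> lmeasurable"
    using fmeasurable_Int_fmeasurable[OF T] by (simp add: Int_commute)
  have pw_eq: "pw n d (\<lambda>x. qp) (\<lambda>x. qm) = (\<lambda>x. qm * 1 + (qp - qm) * indicator H x)"
    unfolding pw_def H_def by (auto simp: indicator_def)
  have "((\<lambda>x. 1) has_integral measure lebesgue T) T"
    using T by (simp add: lmeasure_integral integrable_on_const has_integral_integrable_integral)
  moreover have "(indicator H has_integral measure lebesgue (H \<inter> T)) T"
    using HT by (simp add: integrable_on_indicator integral_indicator has_integral_integrable_integral)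
  ultimately have "(pw n d (\<lambda>x. qp) (\<lambda>x. qm) has_integral
      qm * measure lebesgue T + (qp - qm) * measure lebesgue (H \<inter> T)) T"
    unfolding pw_eq by (intro has_integral_add has_integral_mult_right)
  then have "integral T (pw n d (\<lambda>x. qp) (\<lambda>x. qm))
      = qm * measure lebesgue T + (qp - qm) * measure lebesgue (H \<inter> T)"
    by (rule integral_unique)
  moreover have "measure lebesgue (H \<inter> T) \<le> measure lebesgue T"
    using T HT by (intro measure_mono_fmeasurable) auto
  ultimately show ?thesis
    using pos that[of "measure lebesgue (H \<inter> T) / measure lebesgue T"]
    by (simp add: field_simps)
qed

lemma norm_affine_le_midpoints:
  fixes g :: "'a::real_vector \<Rightarrow> 'b::real_normed_vector"
  assumes g: "linear g" and x: "x \<in> convex hull {a, b, c}"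
  shows "norm (g x + w) \<le> norm (g (midpoint b c) + w) + norm (g (midpoint c a) + w)
           + norm (g (midpoint a b) + w)"
proof -
  obtain u v t where uvt: "0 \<le> u" "0 \<le> v" "0 \<le> t" "u + v + t = 1"
    and x_eq: "x = u *\<^sub>R a + v *\<^sub>R b + t *\<^sub>R c"
    using x unfolding convex_hull_3 by blast
  define ka kb kc where "ka = 1 - 2 * u" and "kb = 1 - 2 * v" and "kc = 1 - 2 * t"
  have k: "\<bar>ka\<bar> \<le> 1" "\<bar>kb\<bar> \<le> 1" "\<bar>kc\<bar> \<le> 1" "ka + kb + kc = 1"
    using uvt by (auto simp: ka_def kb_def kc_def)
  have "ka *\<^sub>R midpoint b c + kb *\<^sub>R midpoint c a + kc *\<^sub>R midpoint a b
          = ((kb + kc) / 2) *\<^sub>R a + ((kc + ka) / 2) *\<^sub>R b + ((ka + kb) / 2) *\<^sub>R c"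
    by (simp add: midpoint_def scaleR_add_right scaleR_add_left add_divide_distrib algebra_simps)
  also have "\<dots> = x"
  proof -
    have "(kb + kc) / 2 = u" "(kc + ka) / 2 = v" "(ka + kb) / 2 = t"
      using uvt unfolding ka_def kb_def kc_def by simp_all
    then show ?thesis unfolding x_eq by simp
  qed
  finally have "x = ka *\<^sub>R midpoint b c + kb *\<^sub>R midpoint c a + kc *\<^sub>R midpoint a b" ..
  then have "g x + w = ka *\<^sub>R (g (midpoint b c) + w) + kb *\<^sub>R (g (midpoint c a) + w)
                     + kc *\<^sub>R (g (midpoint a b) + w)"
    using k(4) by (simp add: linear_add[OF g] linear_scale[OF g] algebra_simps flip: scaleR_add_left)
  also have "norm \<dots> \<le> norm (g (midpoint b c) + w) + norm (g (midpoint c a) + w)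
                     + norm (g (midpoint a b) + w)"
    using k(1-3) by (intro norm_triangle_le add_mono) (auto intro: mult_left_le_one_le)
  finally show ?thesis .
qed

lemma norm_linear_le_of_cball:
  fixes g :: "'a::real_normed_vector \<Rightarrow> 'b::real_normed_vector"
  assumes g: "linear g" and r: "r > 0" and ball: "cball x0 r \<subseteq> S"
    and bound: "\<And>y. y \<in> S \<Longrightarrow> norm (g y + w) \<le> M" and e: "norm e = 1"
  shows "norm (g e) \<le> M / r"
proof -
  have "x0 + r *\<^sub>R e \<in> S" "x0 - r *\<^sub>R e \<in> S"
    using ball r e by (auto simp: dist_norm subset_iff)
  then have "norm ((g (x0 + r *\<^sub>R e) + w) - (g (x0 - r *\<^sub>R e) + w)) \<le> 2 * M"
    using norm_triangle_ineq4[of "g (x0 + r *\<^sub>R e) + w" "g (x0 - r *\<^sub>R e) + w"] bound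
    by (smt (verit))
  moreover have "(g (x0 + r *\<^sub>R e) + w) - (g (x0 - r *\<^sub>R e) + w) = (2 * r) *\<^sub>R g e"
    by (simp add: linear_add[OF g] linear_diff[OF g] linear_scale[OF g] flip: scaleR_2)
  ultimately show ?thesis
    using r by (simp add: field_simps)
qed

lemma norm_matrix_le_sum_columns:
  fixes A :: "real^'n^'m"
  shows "norm A \<le> (\<Sum>j\<in>UNIV. norm (A *v axis j 1))"
proof -
  have column: "(A *v axis j 1) $ i = A $ i $ j" for i j
    by (simp add: matrix_vector_mult_def axis_def if_distrib cong: if_cong)
  have "(norm A)\<^sup>2 = (\<Sum>i\<in>UNIV. \<Sum>j\<in>UNIV. (A $ i $ j)\<^sup>2)"
    by (simp add: norm_vec_def L2_set_def sum_nonneg)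
  also have "\<dots> = (\<Sum>j\<in>UNIV. (norm (A *v axis j 1))\<^sup>2)"
    by (subst sum.swap) (simp add: norm_vec_def L2_set_def sum_nonneg column)
  finally have "norm A = L2_set (\<lambda>j. norm (A *v axis j 1)) UNIV"
    by (simp add: L2_set_def real_sqrt_unique)
  also have "\<dots> \<le> (\<Sum>j\<in>UNIV. norm (A *v axis j 1))"
    by (rule L2_set_le_sum) simp
  finally show ?thesis .
qed

lemma norm_matrix_le_of_unit:
  fixes A :: "real^'n^'m" and K :: real
  assumes "\<And>e. norm e = 1 \<Longrightarrow> norm (A *v e) \<le> K"
  shows "norm A \<le> CARD('n) * K"
proof -
  have "norm A \<le> (\<Sum>j\<in>UNIV. norm (A *v axis j 1))"
    by (rule norm_matrix_le_sum_columns)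
  also have "\<dots> \<le> of_nat (card (UNIV :: 'n set)) * K"
    using assms by (intro sum_bounded_above) (simp add: norm_axis_1)
  finally show ?thesis .
qed

lemma compact_tri: "compact (tri a b c)"
  by (simp add: tri_def compact_convex_hull)

lemma convex_tri: "convex (tri a b c)"
  by (simp add: tri_def)

lemma vertices_in_tri: "a \<in> tri a b c" "b \<in> tri a b c" "c \<in> tri a b c"
  by (simp_all add: tri_def hull_inc)

lemma diameter_tri_pos:
  assumes "\<not> collinear {a, b, c}"
  shows "diameter (tri a b c) > 0"
proof -
  have "a \<noteq> b"
    using assms by auto
  then have "0 < dist a b"
    by simp
  also have "dist a b \<le> diameter (tri a b c)"
    using compact_tri vertices_in_tri
    by (intro diameter_bounded_bound) (auto intro: compact_imp_bounded)
  finally show ?thesis .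
qed

lemma two_radius_le_diameter:
  fixes T :: "'a::euclidean_space set"
  assumes "bounded T" "cball x r \<subseteq> T"
  shows "2 * r \<le> diameter T"
proof (cases "r < 0")
  case True
  then show ?thesis
    using diameter_ge_0[OF assms(1)] by linarith
next
  case False
  then show ?thesis
    using diameter_subset[OF assms(2,1)] by simp
qed

lemma bdd_above_inscribed_radii:
  fixes T :: "'a::euclidean_space set"
  assumes "bounded T"
  shows "bdd_above {r. \<exists>x. cball x r \<subseteq> T}"
proof (rule bdd_aboveI)
  fix r assume "r \<in> {r. \<exists>x. cball x r \<subseteq> T}"
  then show "r \<le> diameter T"
    using two_radius_le_diameter[OF assms] diameter_ge_0[OF assms] by fastforce
qed

lemma inradius_nonneg:
  fixes T :: "(real^2) set"
  assumes "bounded T" "x \<in> T"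
  shows "inradius T \<ge> 0"
proof -
  have "0 \<in> {r. \<exists>x. cball x r \<subseteq> T}"
    using assms(2) by auto
  then show ?thesis
    unfolding inradius_def using bdd_above_inscribed_radii[OF assms(1)] by (rule cSup_upper)
qed

lemma obtain_inscribed_ball:
  fixes T :: "(real^2) set"
  assumes "bounded T" "x \<in> T" "inradius T > 0"
  obtains x0 r where "r > 0" "cball x0 r \<subseteq> T" "inradius T < 2 * r"
proof -
  have "0 \<in> {r. \<exists>x. cball x r \<subseteq> T}"
    using assms(2) by auto
  moreover have "inradius T / 2 < Sup {r. \<exists>x. cball x r \<subseteq> T}"
    using assms(3) unfolding inradius_def by simp
  ultimately obtain r where "r \<in> {r. \<exists>x. cball x r \<subseteq> T}" "inradius T / 2 < r"
    using less_cSup_iff[OF _ bdd_above_inscribed_radii[OF assms(1)]] by blast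
  then show ?thesis
    using that assms(3) by auto
qed

definition rot90 :: "real^2 \<Rightarrow> real^2" where
  "rot90 n = vector [- n $ 2, n $ 1]"

lemma rot90_nth [simp]: "rot90 n $ 1 = - n $ 2" "rot90 n $ 2 = n $ 1"
  by (simp_all add: rot90_def)

lemma inner_real2: "(x::real^2) \<bullet> y = x $ 1 * y $ 1 + x $ 2 * y $ 2"
  by (simp add: inner_vec_def sum_2)

lemma matrix_vector_mult_real2:
  "((A::real^2^2) *v x) $ 1 = A $ 1 $ 1 * x $ 1 + A $ 1 $ 2 * x $ 2"
  "((A::real^2^2) *v x) $ 2 = A $ 2 $ 1 * x $ 1 + A $ 2 $ 2 * x $ 2"
  by (simp_all add: matrix_vector_mult_def sum_2)

lemma inner_rot90_self [simp]: "n \<bullet> rot90 n = 0" "rot90 n \<bullet> n = 0"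
  by (simp_all add: inner_real2 algebra_simps)

lemma norm_rot90 [simp]: "norm (rot90 n) = norm n"
  by (simp add: norm_eq_sqrt_inner inner_real2 algebra_simps)

lemma traceless_matrix_rank_one:
  fixes D :: "real^2^2"
  assumes n: "norm n = 1" and kernel: "D *v rot90 n = 0" and trace: "trace D = 0"
  shows "D *v y = ((rot90 n \<bullet> (D *v n)) * (n \<bullet> y)) *\<^sub>R rot90 n"
proof -
  have "n $ 1 * n $ 1 + n $ 2 * n $ 2 = 1"
    using n by (simp add: norm_eq_sqrt_inner inner_real2)
  moreover have "D $ 1 $ 1 * - n $ 2 + D $ 1 $ 2 * n $ 1 = 0"
    "D $ 2 $ 1 * - n $ 2 + D $ 2 $ 2 * n $ 1 = 0"
    using kernel by (simp_all add: vec_eq_iff forall_2 matrix_vector_mult_real2)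
  moreover have "D $ 1 $ 1 + D $ 2 $ 2 = 0"
    using trace by (simp add: trace_def sum_2)
  ultimately show ?thesis
    by (simp add: vec_eq_iff forall_2 matrix_vector_mult_real2 inner_real2) algebra
qed

lemma Gamma_tangent_pair:
  assumes T: "convex T" and plus: "Tplus T n d \<noteq> {}" and minus: "Tminus T n d \<noteq> {}"
  obtains x0 \<epsilon> where "\<epsilon> \<noteq> 0" "x0 \<in> Gamma T n d" "x0 + \<epsilon> *\<^sub>R rot90 n \<in> Gamma T n d"
proof -
  obtain xp xm where xp: "xp \<in> interior T" "n \<bullet> xp > d" and xm: "xm \<in> interior T" "n \<bullet> xm < d"
    using plus minus unfolding Tplus_def Tminus_def by blast
  define \<theta> where "\<theta> = (d - n \<bullet> xm) / (n \<bullet> xp - n \<bullet> xm)"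
  define x0 where "x0 = (1 - \<theta>) *\<^sub>R xm + \<theta> *\<^sub>R xp"
  have "0 < \<theta>" "\<theta> < 1"
    using xp xm by (auto simp: \<theta>_def field_simps)
  then have x0: "x0 \<in> interior T"
    unfolding x0_def using convexD[OF convex_interior[OF T] xm(1) xp(1)] by simp
  have x0_line: "n \<bullet> x0 = d"
    using xp xm by (simp add: x0_def \<theta>_def inner_add_right algebra_simps) (simp add: field_simps)
  obtain \<epsilon> where \<epsilon>: "\<epsilon> > 0" "ball x0 \<epsilon> \<subseteq> interior T"
    using x0 open_contains_ball open_interior by blast
  have n_pos: "1 + norm n > 0"
    using norm_ge_zero[of n] by linarith
  define \<delta> where "\<delta> = \<epsilon> / 2 / (1 + norm n)"
  have "\<delta> > 0"
    using \<epsilon>(1) n_pos by (simp add: \<delta>_def)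
  then have "\<delta> * norm n \<le> \<delta> * (1 + norm n)"
    by (simp add: mult_left_mono)
  also have "\<dots> = \<epsilon> / 2"
    using n_pos unfolding \<delta>_def by (simp add: field_simps)
  also have "\<dots> < \<epsilon>"
    using \<epsilon>(1) by simp
  finally have "\<delta> * norm n < \<epsilon>" .
  then have "x0 + \<delta> *\<^sub>R rot90 n \<in> ball x0 \<epsilon>"
    using \<open>\<delta> > 0\<close> by (simp add: dist_norm)
  then have "x0 + \<delta> *\<^sub>R rot90 n \<in> interior T"
    using \<epsilon>(2) by blast
  moreover have "n \<bullet> (x0 + \<delta> *\<^sub>R rot90 n) = d"
    using x0_line by (simp add: inner_add_right)
  ultimately show ?thesis
    using that[of \<delta> x0] \<open>\<delta> > 0\<close> x0 x0_line by (simp add: Gamma_def)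
qed

definition grad_jump :: "real^2 \<Rightarrow> real^2^2 \<Rightarrow> real^2^2 \<Rightarrow> real" where
  "grad_jump n Ap Am = rot90 n \<bullet> ((Ap - Am) *v n)"

lemma is_ife_velocity_jump:
  assumes ife: "is_ife mup mum T n d Ap bp qp Am bm qm" and T: "convex T" and n: "norm n = 1"
    and plus: "Tplus T n d \<noteq> {}" and minus: "Tminus T n d \<noteq> {}"
  shows "Am *v y = Ap *v y - (grad_jump n Ap Am * (n \<bullet> y)) *\<^sub>R rot90 n" (is ?grad)
    and "Am *v y + bm = Ap *v y + bp - (grad_jump n Ap Am * (n \<bullet> y - d)) *\<^sub>R rot90 n"
proof -
  obtain x0 \<epsilon> where "\<epsilon> \<noteq> 0" and x0: "x0 \<in> Gamma T n d" and x1: "x0 + \<epsilon> *\<^sub>R rot90 n \<in> Gamma T n d"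
    using Gamma_tangent_pair[OF T plus minus] .
  have cont: "Ap *v x + bp = Am *v x + bm" if "x \<in> Gamma T n d" for x
    using ife that unfolding is_ife_def by blast
  have "Ap *v x0 + bp + \<epsilon> *\<^sub>R (Ap *v rot90 n) = Am *v x0 + bm + \<epsilon> *\<^sub>R (Am *v rot90 n)"
    using cont[OF x1] by (simp add: matrix_vector_right_distrib matrix_vector_mult_scaleR algebra_simps)
  then have "\<epsilon> *\<^sub>R (Ap *v rot90 n) = \<epsilon> *\<^sub>R (Am *v rot90 n)"
    using cont[OF x0] by simp
  then have "(Ap - Am) *v rot90 n = 0"
    using \<open>\<epsilon> \<noteq> 0\<close> by (simp add: matrix_vector_mult_diff_rdistrib)
  moreover have "trace (Ap - Am) = 0"
    using ife by (simp add: is_ife_def trace_sub)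
  ultimately have jump: "(Ap - Am) *v y = (grad_jump n Ap Am * (n \<bullet> y)) *\<^sub>R rot90 n" for y
    unfolding grad_jump_def by (rule traceless_matrix_rank_one[OF n])
  have "Am *v z = Ap *v z - (Ap - Am) *v z" for z
    by (simp add: matrix_vector_mult_diff_rdistrib)
  then have grad: "Am *v z = Ap *v z - (grad_jump n Ap Am * (n \<bullet> z)) *\<^sub>R rot90 n" for z
    by (simp only: jump)
  then show ?grad .
  have "n \<bullet> x0 = d" "bm = Ap *v x0 + bp - Am *v x0"
    using x0 cont[OF x0] by (simp_all add: Gamma_def)
  then show "Am *v y + bm = Ap *v y + bp - (grad_jump n Ap Am * (n \<bullet> y - d)) *\<^sub>R rot90 n"
    by (simp add: grad[of y] grad[of x0] right_diff_distrib scaleR_diff_left)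
qed

lemma inner_stress:
  fixes A :: "real^'n^'n"
  shows "((\<mu> *\<^sub>R (A + transpose A) - q *\<^sub>R mat 1) *v n) \<bullet> u
           = \<mu> * ((A *v n) \<bullet> u + n \<bullet> (A *v u)) - q * (n \<bullet> u)"
proof -
  have "(transpose A *v n) \<bullet> u = n \<bullet> (A *v u)"
    by (simp add: dot_lmul_matrix)
  then show ?thesis
    by (simp add: matrix_vector_mult_diff_rdistrib matrix_vector_mult_add_rdistrib
        scaleR_matrix_vector_assoc[symmetric] inner_diff_left inner_add_left algebra_simps)
qed

lemma is_ife_stress_jump:
  assumes ife: "is_ife mup mum T n d Ap bp qp Am bm qm" and n: "norm n = 1"
    and grad: "\<And>y. Am *v y = Ap *v y - (\<beta> * (n \<bullet> y)) *\<^sub>R rot90 n"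
  shows "qp - qm = 2 * (mup - mum) * (n \<bullet> (Ap *v n))"
    and "(mup - mum) * ((Ap *v n) \<bullet> rot90 n + n \<bullet> (Ap *v rot90 n)) + mum * \<beta> = 0"
proof -
  let ?t = "rot90 n"
  have nn: "n \<bullet> n = 1" and tt: "?t \<bullet> ?t = 1"
    using n by (simp_all add: dot_square_norm)
  have Am_n: "Am *v n = Ap *v n - \<beta> *\<^sub>R ?t" and Am_t: "Am *v ?t = Ap *v ?t"
    using grad[of n] grad[of ?t] nn by simp_all
  have stress: "(mup *\<^sub>R (Ap + transpose Ap) - qp *\<^sub>R mat 1) *v n
      = (mum *\<^sub>R (Am + transpose Am) - qm *\<^sub>R mat 1) *v n"
    using ife by (simp add: is_ife_def)
  have balance: "mup * ((Ap *v n) \<bullet> u + n \<bullet> (Ap *v u)) - qp * (n \<bullet> u)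
      = mum * ((Am *v n) \<bullet> u + n \<bullet> (Am *v u)) - qm * (n \<bullet> u)" for u
    using arg_cong[where f = "\<lambda>v. v \<bullet> u", OF stress] by (simp only: inner_stress)
  show "qp - qm = 2 * (mup - mum) * (n \<bullet> (Ap *v n))"
    using balance[of n] nn
    by (simp add: Am_n inner_diff_left inner_commute[of "Ap *v n" n] algebra_simps)
  show "(mup - mum) * ((Ap *v n) \<bullet> ?t + n \<bullet> (Ap *v ?t)) + mum * \<beta> = 0"
    using balance[of ?t] tt by (simp add: Am_n Am_t inner_diff_left algebra_simps)
qed

lemma abs_le_abs_diff_if_convex_comb_zero:
  fixes l qp qm :: real
  assumes "0 \<le> l" "l \<le> 1" "qm + l * (qp - qm) = 0"
  shows "\<bar>qp\<bar> \<le> \<bar>qp - qm\<bar>" "\<bar>qm\<bar> \<le> \<bar>qp - qm\<bar>"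
proof -
  have "qp = (1 - l) * (qp - qm)" "- qm = l * (qp - qm)"
    using assms(3) by (simp_all add: algebra_simps)
  then have "\<bar>qp\<bar> = (1 - l) * \<bar>qp - qm\<bar>" "\<bar>qm\<bar> = l * \<bar>qp - qm\<bar>"
    using assms(1,2) by (metis abs_mult abs_of_nonneg diff_ge_0_iff_ge abs_minus_cancel)+
  then show "\<bar>qp\<bar> \<le> \<bar>qp - qm\<bar>" "\<bar>qm\<bar> \<le> \<bar>qp - qm\<bar>"
    using assms(1,2) by (simp_all add: mult_left_le_one_le)
qed

definition ife_bound :: "real \<Rightarrow> real \<Rightarrow> real \<Rightarrow> real" where
  "ife_bound mup mum rho = 6 + 24 * \<bar>rho\<bar> * (1 + 4 * \<bar>mup - mum\<bar> / min mup mum)"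

definition ife_constant :: "real \<Rightarrow> real \<Rightarrow> real \<Rightarrow> real" where
  "ife_constant mup mum rho = (1 + 2 * \<bar>mup - mum\<bar>) * ife_bound mup mum rho"

lemma ife_bound_ge: "mup > 0 \<Longrightarrow> mum > 0 \<Longrightarrow> ife_bound mup mum rho \<ge> 6"
  unfolding ife_bound_def by simp

lemma ife_bound_le_ife_constant: "mup > 0 \<Longrightarrow> mum > 0 \<Longrightarrow> ife_bound mup mum rho \<le> ife_constant mup mum rho"
  and pressure_bound_le_ife_constant:
    "mup > 0 \<Longrightarrow> mum > 0 \<Longrightarrow> 2 * \<bar>mup - mum\<bar> * ife_bound mup mum rho \<le> ife_constant mup mum rho"
  using ife_bound_ge[of mup mum rho] by (simp_all add: ife_constant_def algebra_simps)

lemma ife_constant_pos: "mup > 0 \<Longrightarrow> mum > 0 \<Longrightarrow> ife_constant mup mum rho > 0"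
  using ife_bound_ge[of mup mum rho] ife_bound_le_ife_constant[of mup mum rho] by linarith

locale ife_basis =
  fixes mup mum rho :: real and a b c n :: "real^2" and d :: real and i :: nat
    and Ap :: "real^2^2" and bp :: "real^2" and qp :: real
    and Am :: "real^2^2" and bm :: "real^2" and qm :: real
    and s \<kappa> :: real
  assumes mu_pos: "mup > 0" "mum > 0"
    and nondegenerate: "\<not> collinear {a, b, c}"
    and shape_regular: "diameter (tri a b c) \<le> rho * inradius (tri a b c)"
    and unit_normal: "norm n = 1"
    and plus_nonempty: "Tplus (tri a b c) n d \<noteq> {}"
    and minus_nonempty: "Tminus (tri a b c) n d \<noteq> {}"
    and ife: "is_ife mup mum (tri a b c) n d Ap bp qp Am bm qm"
    and dof_delta: "\<And>j. j \<in> {1..7} \<Longrightarrow> dof a b c n d Ap bp qp Am bm qm j = (if j = i then 1 else 0)"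
    and fit: "ramp_fit s \<kappa> (n \<bullet> a - d) (n \<bullet> b - d) (n \<bullet> c - d)"
begin

abbreviation "T \<equiv> tri a b c"

abbreviation "h \<equiv> diameter T"

definition "tangent = rot90 n"

definition "jump = grad_jump n Ap Am"

definition "psi y = n \<bullet> y - d"

definition "grad_w y = Ap *v y - (jump * s * (n \<bullet> y)) *\<^sub>R tangent"

definition "w y = Ap *v y + bp - (jump * (s * psi y + \<kappa>)) *\<^sub>R tangent"

definition "M = norm (w (midpoint b c)) + norm (w (midpoint c a)) + norm (w (midpoint a b))"

lemma ramp_mean_psi_edges:
  "ramp_mean (psi b) (psi c) = s * psi (midpoint b c) + \<kappa>"
  "ramp_mean (psi c) (psi a) = s * psi (midpoint c a) + \<kappa>"
  "ramp_mean (psi a) (psi b) = s * psi (midpoint a b) + \<kappa>"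
  using fit by (simp_all add: ramp_fit_def psi_def midpoint_def inner_add_right field_simps)

lemma h_pos: "h > 0"
  using nondegenerate by (rule diameter_tri_pos)

lemma bounded_T: "bounded T"
  by (simp add: compact_tri compact_imp_bounded)

lemma rho_pos: "rho > 0" and inradius_pos: "inradius T > 0"
proof -
  have "0 < rho * inradius T"
    using h_pos shape_regular by linarith
  moreover have "inradius T \<ge> 0"
    using bounded_T vertices_in_tri(1) by (rule inradius_nonneg)
  ultimately show "rho > 0" "inradius T > 0"
    by (auto simp: zero_less_mult_iff)
qed

lemma inscribed_ball:
  obtains x0 r where "r > 0" "cball x0 r \<subseteq> T" "h \<le> 2 * rho * r"
proof -
  obtain x0 r where r: "r > 0" "cball x0 r \<subseteq> T" "inradius T < 2 * r"
    using bounded_T vertices_in_tri(1) inradius_pos by (rule obtain_inscribed_ball)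
  have "rho * inradius T \<le> rho * (2 * r)"
    using rho_pos r(3) by simp
  then have "h \<le> 2 * rho * r"
    using shape_regular by simp
  with r show ?thesis
    using that by blast
qed

lemma measure_T_pos: "measure lebesgue T > 0"
proof -
  obtain x0 r where "r > 0" "cball x0 r \<subseteq> T"
    using inscribed_ball by blast
  then have "measure lebesgue (cball x0 r) \<le> measure lebesgue T"
    using compact_tri by (intro measure_mono_fmeasurable) (auto intro: lmeasurable_compact)
  moreover have "measure lebesgue (cball x0 r) > 0"
    using content_cball_pos[OF \<open>r > 0\<close>] by simp
  ultimately show ?thesis
    by linarith
qed

lemma grad_jump_rel: "Am *v y = Ap *v y - (jump * (n \<bullet> y)) *\<^sub>R tangent"
  unfolding jump_def tangent_def
  using ife convex_tri unit_normal plus_nonempty minus_nonempty by (rule is_ife_velocity_jump)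

lemma velocity_jump_rel: "Am *v y + bm = Ap *v y + bp - (jump * psi y) *\<^sub>R tangent"
  unfolding jump_def tangent_def psi_def
  using ife convex_tri unit_normal plus_nonempty minus_nonempty by (rule is_ife_velocity_jump)

lemma pressure_jump: "qp - qm = 2 * (mup - mum) * (n \<bullet> (Ap *v n))"
  and tangential_stress: "(mup - mum) * ((Ap *v n) \<bullet> tangent + n \<bullet> (Ap *v tangent)) + mum * jump = 0"
  using is_ife_stress_jump[OF ife unit_normal grad_jump_rel[unfolded tangent_def]]
  by (simp_all add: tangent_def)

lemma linear_grad_w: "linear grad_w"
  unfolding grad_w_def
  by (rule linearI) (simp_all add: matrix_vector_right_distrib matrix_vector_mult_scaleR
      inner_add_right algebra_simps scaleR_add_left)

lemma w_eq_grad_w: "w y = grad_w y + w 0"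
  unfolding w_def grad_w_def psi_def by (simp add: algebra_simps scaleR_add_left scaleR_diff_left)

lemma edge_avg_eq_w_midpoint:
  assumes "ramp_mean (psi p) (psi q) = s * psi (midpoint p q) + \<kappa>"
  shows "edge_avg (\<lambda>x. pw n d (\<lambda>x. Ap *v x + bp) (\<lambda>x. Am *v x + bm) x $ k) p q = w (midpoint p q) $ k"
proof -
  have "edge_avg (\<lambda>x. pw n d (\<lambda>x. Ap *v x + bp) (\<lambda>x. Am *v x + bm) x $ k) p q
      = (Ap *v midpoint p q + bp) $ k - jump * tangent $ k * ramp_mean (psi p) (psi q)"
    using edge_avg_pw_velocity[OF velocity_jump_rel[unfolded psi_def]] by (simp add: psi_def)
  also have "\<dots> = w (midpoint p q) $ k"
    by (simp add: assms w_def)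
  finally show ?thesis .
qed

lemma dof_eq_w_midpoint:
  "dof a b c n d Ap bp qp Am bm qm 1 = w (midpoint b c) $ 1"
  "dof a b c n d Ap bp qp Am bm qm 2 = w (midpoint c a) $ 1"
  "dof a b c n d Ap bp qp Am bm qm 3 = w (midpoint a b) $ 1"
  "dof a b c n d Ap bp qp Am bm qm 4 = w (midpoint b c) $ 2"
  "dof a b c n d Ap bp qp Am bm qm 5 = w (midpoint c a) $ 2"
  "dof a b c n d Ap bp qp Am bm qm 6 = w (midpoint a b) $ 2"
  using ramp_mean_psi_edges[THEN edge_avg_eq_w_midpoint]
  by (simp_all add: dof_def Let_def edge_start_def edge_end_def)

lemma w_midpoint_bounds:
  assumes "m \<in> {midpoint b c, midpoint c a, midpoint a b}"
  shows "norm (w m) \<le> 2" and "i = 7 \<Longrightarrow> w m = 0"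
proof -
  have "\<bar>w m $ 1\<bar> \<le> 1 \<and> \<bar>w m $ 2\<bar> \<le> 1" "i = 7 \<Longrightarrow> w m $ 1 = 0 \<and> w m $ 2 = 0"
    using assms dof_delta[of 1] dof_delta[of 2] dof_delta[of 3] dof_delta[of 4] dof_delta[of 5]
      dof_delta[of 6]
    unfolding dof_eq_w_midpoint by (auto split: if_splits)
  moreover have "norm (w m) \<le> \<bar>w m $ 1\<bar> + \<bar>w m $ 2\<bar>"
    using norm_le_l1_cart[of "w m"] by (simp add: sum_2)
  ultimately show "norm (w m) \<le> 2" "i = 7 \<Longrightarrow> w m = 0"
    by (auto simp: vec_eq_iff forall_2)
qed

lemma M_le: "M \<le> 6" and M_eq_0: "i = 7 \<Longrightarrow> M = 0"
  using w_midpoint_bounds[of "midpoint b c"] w_midpoint_bounds[of "midpoint c a"]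
    w_midpoint_bounds[of "midpoint a b"]
  by (auto simp: M_def)

lemma norm_w_le: "y \<in> T \<Longrightarrow> norm (w y) \<le> M"
  unfolding M_def tri_def using norm_affine_le_midpoints[OF linear_grad_w] by (metis w_eq_grad_w)

lemma norm_grad_w_le:
  assumes "norm e = 1"
  shows "h * norm (grad_w e) \<le> 2 * rho * M"
proof -
  obtain x0 r where "r > 0" "cball x0 r \<subseteq> T" "h \<le> 2 * rho * r"
    using inscribed_ball by blast
  then have "norm (grad_w e) \<le> M / r"
    using norm_linear_le_of_cball[OF linear_grad_w] norm_w_le w_eq_grad_w assms by metis
  then have "h * norm (grad_w e) \<le> 2 * rho * r * (M / r)"
    using \<open>h \<le> 2 * rho * r\<close> \<open>r > 0\<close> rho_pos by (intro mult_mono) auto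
  then show ?thesis
    using \<open>r > 0\<close> by simp
qed

lemma unit_vectors: "n \<bullet> n = 1" "tangent \<bullet> tangent = 1" "norm tangent = 1" "n \<bullet> tangent = 0"
  using unit_normal by (simp_all add: tangent_def dot_square_norm)

lemma jump_bound: "min mup mum * (h * \<bar>jump\<bar>) \<le> 4 * rho * \<bar>mup - mum\<bar> * M"
proof -
  define X where "X = grad_w n \<bullet> tangent + n \<bullet> grad_w tangent"
  define K where "K = mum + (mup - mum) * s"
  have "X = (Ap *v n) \<bullet> tangent + n \<bullet> (Ap *v tangent) - jump * s"
    using unit_vectors by (simp add: X_def grad_w_def inner_diff_left inner_diff_right)
  then have jump_K: "jump * K = - (mup - mum) * X"
    using tangential_stress unfolding K_def by algebra
  have K: "min mup mum \<le> K"
  proof -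
    have "min mup mum = (1 - s) * min mup mum + s * min mup mum"
      by (simp add: algebra_simps)
    also have "\<dots> \<le> (1 - s) * mum + s * mup"
      using fit by (intro add_mono mult_left_mono) (auto simp: ramp_fit_def)
    finally show ?thesis
      by (simp add: K_def algebra_simps)
  qed
  have "\<bar>X\<bar> \<le> norm (grad_w n) + norm (grad_w tangent)"
    unfolding X_def using unit_vectors unit_normal Cauchy_Schwarz_ineq2[of "grad_w n" tangent]
      Cauchy_Schwarz_ineq2[of n "grad_w tangent"] by simp
  then have "h * \<bar>X\<bar> \<le> h * norm (grad_w n) + h * norm (grad_w tangent)"
    using h_pos by (simp add: distrib_left[symmetric])
  then have X: "h * \<bar>X\<bar> \<le> 4 * rho * M"
    using norm_grad_w_le[OF unit_normal] norm_grad_w_le[OF unit_vectors(3)] by linarith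
  have "min mup mum * (h * \<bar>jump\<bar>) \<le> K * (h * \<bar>jump\<bar>)"
    using K h_pos by (simp add: mult_right_mono)
  also have "\<dots> = h * \<bar>jump * K\<bar>"
    using K mu_pos by (simp add: abs_mult)
  also have "\<dots> = \<bar>mup - mum\<bar> * (h * \<bar>X\<bar>)"
    using jump_K by (simp add: abs_mult abs_minus_commute)
  also have "\<dots> \<le> \<bar>mup - mum\<bar> * (4 * rho * M)"
    using X by (simp add: mult_left_mono)
  finally show ?thesis
    by (simp add: algebra_simps)
qed

lemma norm_Ap_unit_le:
  assumes "norm e = 1"
  shows "h * norm (Ap *v e) \<le> 2 * rho * M + h * \<bar>jump\<bar>"
proof -
  have "\<bar>n \<bullet> e\<bar> \<le> 1"
    using Cauchy_Schwarz_ineq2[of n e] unit_normal assms by simp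
  then have "\<bar>s * (n \<bullet> e)\<bar> \<le> 1"
    using fit by (auto simp: ramp_fit_def abs_mult intro: mult_le_one)
  then have "norm ((jump * s * (n \<bullet> e)) *\<^sub>R tangent) \<le> \<bar>jump\<bar>"
    using unit_vectors by (simp add: abs_mult mult.assoc mult_left_le)
  moreover have "Ap *v e = grad_w e + (jump * s * (n \<bullet> e)) *\<^sub>R tangent"
    by (simp add: grad_w_def)
  ultimately have "norm (Ap *v e) \<le> norm (grad_w e) + \<bar>jump\<bar>"
    by (metis norm_triangle_le add_left_mono)
  then have "h * norm (Ap *v e) \<le> h * norm (grad_w e) + h * \<bar>jump\<bar>"
    using h_pos by (simp add: distrib_left[symmetric])
  then show ?thesis
    using norm_grad_w_le[OF assms] by linarith
qed

lemma norm_Am_unit_le: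
  assumes "norm e = 1"
  shows "h * norm (Am *v e) \<le> 2 * rho * M + 2 * h * \<bar>jump\<bar>"
proof -
  have "\<bar>n \<bullet> e\<bar> \<le> 1"
    using Cauchy_Schwarz_ineq2[of n e] unit_normal assms by simp
  then have "norm ((jump * (n \<bullet> e)) *\<^sub>R tangent) \<le> \<bar>jump\<bar>"
    using unit_vectors by (simp add: abs_mult mult_left_le)
  then have "norm (Am *v e) \<le> norm (Ap *v e) + \<bar>jump\<bar>"
    unfolding grad_jump_rel[of e] by (metis norm_triangle_ineq4 add_left_mono order_trans)
  then have "h * norm (Am *v e) \<le> h * norm (Ap *v e) + h * \<bar>jump\<bar>"
    using h_pos by (simp add: distrib_left[symmetric])
  then show ?thesis
    using norm_Ap_unit_le[OF assms] by linarith
qed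

lemma norm_gradients_le:
  "h * norm Ap \<le> 2 * (2 * rho * M + h * \<bar>jump\<bar>)"
  "h * norm Am \<le> 2 * (2 * rho * M + 2 * h * \<bar>jump\<bar>)"
proof -
  have "norm Ap \<le> CARD(2) * ((2 * rho * M + h * \<bar>jump\<bar>) / h)"
    using norm_Ap_unit_le h_pos by (intro norm_matrix_le_of_unit) (simp add: field_simps mult.commute)
  moreover have "norm Am \<le> CARD(2) * ((2 * rho * M + 2 * h * \<bar>jump\<bar>) / h)"
    using norm_Am_unit_le h_pos by (intro norm_matrix_le_of_unit) (simp add: field_simps mult.commute)
  ultimately show "h * norm Ap \<le> 2 * (2 * rho * M + h * \<bar>jump\<bar>)"
    "h * norm Am \<le> 2 * (2 * rho * M + 2 * h * \<bar>jump\<bar>)"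
    using h_pos by (simp_all add: field_simps)
qed

lemma abs_psi_le:
  assumes "y \<in> T"
  shows "\<bar>psi y\<bar> \<le> h"
proof -
  have dist: "\<bar>psi y - psi x\<bar> \<le> h" if "x \<in> T" for x
  proof -
    have "\<bar>psi y - psi x\<bar> \<le> norm (y - x)"
      using Cauchy_Schwarz_ineq2[of n "y - x"] unit_normal by (simp add: psi_def inner_diff_right)
    also have "\<dots> \<le> h"
      using diameter_bounded_bound[OF bounded_T assms that] by (simp add: dist_norm)
    finally show ?thesis .
  qed
  obtain xp xm where "xp \<in> T" "psi xp > 0" "xm \<in> T" "psi xm < 0"
    using plus_nonempty minus_nonempty interior_subset
    unfolding Tplus_def Tminus_def psi_def by force
  then show ?thesis
    using dist[of xp] dist[of xm] by (auto simp: abs_le_iff)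
qed

lemma abs_fit_le:
  assumes "y \<in> T"
  shows "\<bar>s * psi y + \<kappa>\<bar> \<le> 3 * h"
proof -
  have "\<bar>ramp_mean (psi p) (psi q)\<bar> \<le> h" if "p \<in> T" "q \<in> T" for p q
    using that by (intro abs_ramp_mean_le abs_psi_le)
  then have "\<bar>s * psi (midpoint b c) + \<kappa>\<bar> \<le> h" "\<bar>s * psi (midpoint c a) + \<kappa>\<bar> \<le> h"
    "\<bar>s * psi (midpoint a b) + \<kappa>\<bar> \<le> h"
    using vertices_in_tri by (simp_all flip: ramp_mean_psi_edges)
  moreover have "linear (\<lambda>y. s * (n \<bullet> y))"
    by (rule linearI) (simp_all add: inner_add_right algebra_simps)
  ultimately show ?thesis
    using norm_affine_le_midpoints[of "\<lambda>y. s * (n \<bullet> y)" y a b c "\<kappa> - s * d"] assms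
    by (simp add: tri_def psi_def algebra_simps)
qed

lemma norm_velocities_le:
  assumes "y \<in> T"
  shows "norm (Ap *v y + bp) \<le> M + 3 * h * \<bar>jump\<bar>"
    and "norm (Am *v y + bm) \<le> M + 4 * h * \<bar>jump\<bar>"
proof -
  have "norm ((jump * (s * psi y + \<kappa>)) *\<^sub>R tangent) \<le> 3 * h * \<bar>jump\<bar>"
    using abs_fit_le[OF assms] unit_vectors by (simp add: abs_mult mult_left_mono mult.commute)
  moreover have "Ap *v y + bp = w y + (jump * (s * psi y + \<kappa>)) *\<^sub>R tangent"
    by (simp add: w_def)
  ultimately show plus: "norm (Ap *v y + bp) \<le> M + 3 * h * \<bar>jump\<bar>"
    using norm_w_le[OF assms] by (metis norm_triangle_le add_mono)
  have "norm ((jump * psi y) *\<^sub>R tangent) \<le> h * \<bar>jump\<bar>"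
    using mult_right_mono[OF abs_psi_le[OF assms] abs_ge_zero[of jump]] unit_vectors
    by (simp add: abs_mult mult.commute)
  then show "norm (Am *v y + bm) \<le> M + 4 * h * \<bar>jump\<bar>"
    unfolding velocity_jump_rel
    using plus norm_triangle_ineq4[of "Ap *v y + bp" "(jump * psi y) *\<^sub>R tangent"] by linarith
qed

lemma pressure_average:
  obtains l where "0 \<le> l" "l \<le> 1" "qm + l * (qp - qm) = (if i = 7 then 1 else 0)"
proof -
  obtain l where "0 \<le> l" "l \<le> 1"
    "integral T (pw n d (\<lambda>x. qp) (\<lambda>x. qm)) / measure lebesgue T = qm + l * (qp - qm)"
    using lmeasurable_compact[OF compact_tri] measure_T_pos by (rule average_pw_const)
  moreover have "dof a b c n d Ap bp qp Am bm qm 7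
      = integral T (pw n d (\<lambda>x. qp) (\<lambda>x. qm)) / measure lebesgue T"
    by (simp add: dof_def)
  ultimately show ?thesis
    using that dof_delta[of 7] by (auto split: if_splits)
qed

lemma pressure_jump_le: "h * \<bar>qp - qm\<bar> \<le> 2 * \<bar>mup - mum\<bar> * (2 * rho * M + h * \<bar>jump\<bar>)"
proof -
  have "\<bar>n \<bullet> (Ap *v n)\<bar> \<le> norm (Ap *v n)"
    using Cauchy_Schwarz_ineq2[of n "Ap *v n"] unit_normal by simp
  then have "h * \<bar>n \<bullet> (Ap *v n)\<bar> \<le> h * norm (Ap *v n)"
    using h_pos by (simp add: mult_left_mono)
  also have "\<dots> \<le> 2 * rho * M + h * \<bar>jump\<bar>"
    using norm_Ap_unit_le[OF unit_normal] .
  finally have bound: "h * \<bar>n \<bullet> (Ap *v n)\<bar> \<le> 2 * rho * M + h * \<bar>jump\<bar>" .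
  have "h * \<bar>qp - qm\<bar> = 2 * \<bar>mup - mum\<bar> * (h * \<bar>n \<bullet> (Ap *v n)\<bar>)"
    unfolding pressure_jump by (simp only: abs_mult abs_numeral) (simp add: mult_ac)
  also have "\<dots> \<le> 2 * \<bar>mup - mum\<bar> * (2 * rho * M + h * \<bar>jump\<bar>)"
    using bound by (simp add: mult_left_mono)
  finally show ?thesis .
qed

lemma scaled_jump_le: "h * \<bar>jump\<bar> \<le> 24 * rho * \<bar>mup - mum\<bar> / min mup mum"
proof -
  have "4 * rho * \<bar>mup - mum\<bar> * M \<le> 4 * rho * \<bar>mup - mum\<bar> * 6"
    using M_le rho_pos by (intro mult_left_mono) auto
  then have "min mup mum * (h * \<bar>jump\<bar>) \<le> 24 * rho * \<bar>mup - mum\<bar>"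
    using jump_bound by linarith
  then show ?thesis
    using mu_pos by (simp add: le_divide_eq mult.commute)
qed

lemma scaled_bounds:
  defines "L \<equiv> ife_bound mup mum rho"
  shows "y \<in> T \<Longrightarrow> norm (Ap *v y + bp) \<le> L" "y \<in> T \<Longrightarrow> norm (Am *v y + bm) \<le> L"
    and "h * norm Ap \<le> L" "h * norm Am \<le> L"
    and "h * \<bar>qp - qm\<bar> \<le> 2 * \<bar>mup - mum\<bar> * L"
proof -
  define B where "B = 24 * rho * \<bar>mup - mum\<bar> / min mup mum"
  have L: "L = 6 + 24 * rho + 4 * B"
    using rho_pos by (simp add: L_def ife_bound_def B_def field_simps)
  have B: "B \<ge> 0" and hj: "h * \<bar>jump\<bar> \<le> B"
    using rho_pos mu_pos scaled_jump_le by (simp_all add: B_def)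
  have M: "2 * rho * M \<le> 12 * rho"
    using M_le rho_pos by simp
  show "norm (Ap *v y + bp) \<le> L" "norm (Am *v y + bm) \<le> L" if "y \<in> T"
    using norm_velocities_le[OF that] M_le hj B rho_pos unfolding L by linarith+
  show "h * norm Ap \<le> L" "h * norm Am \<le> L"
    using norm_gradients_le M hj B unfolding L by (simp_all add: algebra_simps)
  have "h * \<bar>qp - qm\<bar> \<le> 2 * \<bar>mup - mum\<bar> * (2 * rho * M + h * \<bar>jump\<bar>)"
    by (rule pressure_jump_le)
  also have "\<dots> \<le> 2 * \<bar>mup - mum\<bar> * L"
  proof (rule mult_left_mono)
    show "2 * rho * M + h * \<bar>jump\<bar> \<le> L"
      using M hj B rho_pos unfolding L by linarith
  qed simp
  finally show "h * \<bar>qp - qm\<bar> \<le> 2 * \<bar>mup - mum\<bar> * L" .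
qed

lemma velocity_basis_bounds:
  assumes "i \<noteq> 7"
  defines "C \<equiv> ife_constant mup mum rho"
  shows "\<forall>x\<in>T. norm (Ap *v x + bp) \<le> C \<and> norm (Am *v x + bm) \<le> C"
    and "norm Ap \<le> C / h" "norm Am \<le> C / h" "\<bar>qp\<bar> \<le> C / h" "\<bar>qm\<bar> \<le> C / h"
proof -
  have L: "ife_bound mup mum rho \<le> C" "2 * \<bar>mup - mum\<bar> * ife_bound mup mum rho \<le> C"
    using mu_pos by (simp_all add: C_def ife_bound_le_ife_constant pressure_bound_le_ife_constant)
  have scaled: "x \<le> C / h" if "h * x \<le> C" for x
    using that h_pos by (simp add: le_divide_eq mult.commute)
  show "\<forall>x\<in>T. norm (Ap *v x + bp) \<le> C \<and> norm (Am *v x + bm) \<le> C"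
    using scaled_bounds(1,2) L by (meson order_trans)
  show "norm Ap \<le> C / h" "norm Am \<le> C / h"
    using scaled_bounds(3,4) L by (meson scaled order_trans)+
  obtain l where "0 \<le> l" "l \<le> 1" "qm + l * (qp - qm) = 0"
    using pressure_average assms by auto
  then have "h * \<bar>qp\<bar> \<le> h * \<bar>qp - qm\<bar>" "h * \<bar>qm\<bar> \<le> h * \<bar>qp - qm\<bar>"
    using abs_le_abs_diff_if_convex_comb_zero h_pos by (simp_all add: mult_left_mono)
  then show "\<bar>qp\<bar> \<le> C / h" "\<bar>qm\<bar> \<le> C / h"
    using scaled_bounds(5) L by (meson scaled order_trans)+
qed

lemma pressure_basis_values:
  assumes "i = 7"
  shows "\<forall>x\<in>T. Ap *v x + bp = 0 \<and> Am *v x + bm = 0"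
    and "Ap = 0" "Am = 0" "\<bar>qp\<bar> = 1" "\<bar>qm\<bar> = 1"
proof -
  have M: "M = 0"
    using assms by (rule M_eq_0)
  then have "min mup mum * (h * \<bar>jump\<bar>) \<le> 0"
    using jump_bound by simp
  then have "jump = 0"
    using mu_pos h_pos by (auto simp: mult_le_0_iff)
  then show "\<forall>x\<in>T. Ap *v x + bp = 0 \<and> Am *v x + bm = 0"
    using norm_velocities_le M by simp
  have "h * norm Ap \<le> 0" "h * norm Am \<le> 0"
    using norm_gradients_le M \<open>jump = 0\<close> by simp_all
  then show "Ap = 0" "Am = 0"
    using h_pos by (simp_all add: mult_le_0_iff)
  then have "qp = qm"
    using pressure_jump by simp
  then show "\<bar>qp\<bar> = 1" "\<bar>qm\<bar> = 1"
    using pressure_average assms by force+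
qed

end

theorem lemma4p5:
  fixes mup mum rho :: real
  assumes "mup > 0" and "mum > 0"
  shows "\<exists>C>0. \<forall>(a::real^2) b c (n::real^2) (d::real) (i::nat)
            (Ap::real^2^2) (bp::real^2) (qp::real) (Am::real^2^2) (bm::real^2) (qm::real).
     (\<not> collinear {a, b, c}
      \<and> diameter (tri a b c) \<le> rho * inradius (tri a b c)
      \<and> norm n = 1
      \<and> Tplus (tri a b c) n d \<noteq> {} \<and> Tminus (tri a b c) n d \<noteq> {}
      \<and> i \<in> {1..7}
      \<and> is_ife mup mum (tri a b c) n d Ap bp qp Am bm qm
      \<and> (\<forall>j\<in>{1..7}. dof a b c n d Ap bp qp Am bm qm j = (if j = i then 1 else 0)))
     \<longrightarrow>
     (i \<le> 6 \<longrightarrow>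
        (\<forall>x \<in> tri a b c. norm (Ap *v x + bp) \<le> C \<and> norm (Am *v x + bm) \<le> C)
        \<and> norm Ap \<le> C / diameter (tri a b c) \<and> norm Am \<le> C / diameter (tri a b c)
        \<and> \<bar>qp\<bar> \<le> C / diameter (tri a b c) \<and> \<bar>qm\<bar> \<le> C / diameter (tri a b c))
     \<and> (i = 7 \<longrightarrow>
        (\<forall>x \<in> tri a b c. Ap *v x + bp = 0 \<and> Am *v x + bm = 0)
        \<and> Ap = 0 \<and> Am = 0 \<and> \<bar>qp\<bar> = 1 \<and> \<bar>qm\<bar> = 1)"
  apply (intro exI[of _ "ife_constant mup mum rho"] conjI[OF ife_constant_pos[OF assms]] allI impI)
  subgoal premises hyps for a b c n d i Ap bp qp Am bm qm
  proof -
    obtain s \<kappa> where fit: "ramp_fit s \<kappa> (n \<bullet> a - d) (n \<bullet> b - d) (n \<bullet> c - d)"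
      using ex_ramp_fit by blast
    interpret ife_basis mup mum rho a b c n d i Ap bp qp Am bm qm s \<kappa>
      by unfold_locales (use assms hyps fit in auto)
    show ?thesis
      using velocity_basis_bounds pressure_basis_values by auto
  qed
  done

end
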